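(* Let $Z\subset\mathbb R^n$ be a convex and compact set. For every $y\in Z\setminus\partial Z$ there exists an extreme point $x$ of $Z$ such that $b(y)=t_y(x)$.
   Context: For $x,y\in Z$ write $x\leq_C y$ if there exist $z\in Z$ and $0<t\leq 1$ with $y=tx+(1-t)z$. The (algebraic) boundary $\partial Z$ is the set of $y\in Z$ for which there exists $x\in Z$ with $x\not\leq_C y$. The weight function is $t_y(x)=\sup\{0\leq t<1 : \frac{y-tx}{1-t}\in Z\}$ for $x,y\in Z$, and the boundariness of $y\in Z$ is $b(y)=\inf_{x\in Z}t_y(x)$. *)

theory Defs
  imports "HOL-Analysis.Analysis"
begin

definition conv_le :: "'a::real_vector set \<Rightarrow> 'a \<Rightarrow> 'a \<Rightarrow> bool" where
  "conv_le Z x y \<longleftrightarrow> (\<exists>z\<in>Z. \<exists>t::real. 0 < t \<and> t \<le> 1 \<and> y = t *\<^sub>R x + (1 - t) *\<^sub>R z)"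

definition alg_boundary :: "'a::real_vector set \<Rightarrow> 'a set" where
  "alg_boundary Z = {y\<in>Z. \<exists>x\<in>Z. \<not> conv_le Z x y}"

definition weight :: "'a::real_vector set \<Rightarrow> 'a \<Rightarrow> 'a \<Rightarrow> real" where
  "weight Z y x = Sup {t::real. 0 \<le> t \<and> t < 1 \<and> (1 / (1 - t)) *\<^sub>R (y - t *\<^sub>R x) \<in> Z}"

definition boundariness :: "'a::real_vector set \<Rightarrow> 'a \<Rightarrow> real" where
  "boundariness Z y = (INF x\<in>Z. weight Z y x)"

end

theory Submission
  imports Defs
begin

text \<open>
  The condition \<open>(y - t x)/(1 - t) \<in> Z\<close> says that \<open>y + (t/(1-t)) (y - x)\<close>, the point reached
  by pushing from \<open>x\<close> through \<open>y\<close>, lies in \<open>Z\<close>. In this form convexity of \<open>Z\<close> shows that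
  \<open>t\<^sub>y\<close> is quasi-concave: its strict superlevel sets are convex. When \<open>y\<close> lies in the relative
  interior of \<open>Z\<close>, \<open>t\<^sub>y\<close> is moreover lower semicontinuous on \<open>Z\<close>, so on the compact set \<open>Z\<close>
  it attains its infimum \<open>b(y)\<close>. If every extreme point had weight larger than \<open>b(y)\<close>, the
  convex superlevel set \<open>{x. b(y) < t\<^sub>y(x)}\<close> would contain the convex hull of the extreme
  points, which is all of \<open>Z\<close> by Krein--Milman, contradicting the attainment of the infimum.
\<close>

lemma compact_lower_semicontinuous_attains_inf:
  fixes f :: "'a::topological_space \<Rightarrow> 'b::linorder"
  assumes "compact S" "S \<noteq> {}"
    and lsc: "\<And>x a. x \<in> S \<Longrightarrow> a < f x \<Longrightarrow> \<exists>U. open U \<and> x \<in> U \<and> (\<forall>z\<in>S \<inter> U. a < f z)"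
  obtains x where "x \<in> S" "\<And>z. z \<in> S \<Longrightarrow> f x \<le> f z"
proof -
  have "\<exists>x\<in>S. \<forall>z\<in>S. f x \<le> f z"
  proof (rule ccontr)
    assume "\<not> ?thesis"
    then obtain g where g: "\<And>x. x \<in> S \<Longrightarrow> g x \<in> S \<and> f (g x) < f x"
      by (metis not_le)
    have "\<forall>x\<in>S. \<exists>U. open U \<and> x \<in> U \<and> (\<forall>z\<in>S \<inter> U. f (g x) < f z)"
      using lsc g by blast
    then obtain U where U: "\<And>x. x \<in> S \<Longrightarrow> open (U x) \<and> x \<in> U x \<and> (\<forall>z\<in>S \<inter> U x. f (g x) < f z)"
      by metis
    obtain C where C: "C \<subseteq> S" "finite C" "S \<subseteq> (\<Union>x\<in>C. U x)"
      using compactE_image[OF \<open>compact S\<close>, of S U] U by blast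
    then have "C \<noteq> {}"
      using \<open>S \<noteq> {}\<close> by blast
    then obtain c where c: "c \<in> C" "\<And>c'. c' \<in> C \<Longrightarrow> f (g c) \<le> f (g c')"
      using ex_is_arg_min_if_finite[OF \<open>finite C\<close>, of "f \<circ> g"]
      by (auto simp: is_arg_min_linorder)
    then obtain c' where "c' \<in> C" "g c \<in> U c'"
      using C g by blast
    then have "f (g c') < f (g c)"
      using U C c g by blast
    then show False
      using c \<open>c' \<in> C\<close> by (simp add: not_le[symmetric])
  qed
  then show thesis
    using that by blast
qed

lemma convex_ray_segment:
  assumes "convex Z" "y \<in> Z" "y + b *\<^sub>R v \<in> Z" "0 \<le> a" "a \<le> b"
  shows "y + a *\<^sub>R v \<in> Z"
proof (cases "a = 0")
  case True
  then show ?thesis using assms by simp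
next
  case False
  then have "0 < a" "0 < b" using assms by auto
  have "(1 - a/b) *\<^sub>R y + (a/b) *\<^sub>R (y + b *\<^sub>R v) \<in> Z"
    using convexD[OF assms(1-3), of "1 - a/b" "a/b"] \<open>0 < a\<close> assms(5) by simp
  also have "(1 - a/b) *\<^sub>R y + (a/b) *\<^sub>R (y + b *\<^sub>R v) = y + a *\<^sub>R v"
    using \<open>0 < b\<close> by (simp add: algebra_simps)
  finally show ?thesis .
qed

text \<open>
  The point \<open>y + a (y - x)\<close> is a convex combination, with weight \<open>a/b\<close>, of \<open>y + b (y - x\<^sub>0)\<close>
  and a point \<open>y + c (x\<^sub>0 - x)\<close>, which is close to \<open>y\<close> when \<open>x\<close> is close to \<open>x\<^sub>0\<close>.
\<close>
lemma stretch_in_convex_near: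
  fixes Z :: "'a::euclidean_space set"
  assumes "convex Z" "y \<in> rel_interior Z" "x\<^sub>0 \<in> Z" "y + b *\<^sub>R (y - x\<^sub>0) \<in> Z" "0 < a" "a < b"
  shows "\<exists>d>0. \<forall>x\<in>Z \<inter> ball x\<^sub>0 d. y + a *\<^sub>R (y - x) \<in> Z"
proof -
  obtain r where r: "r > 0" "ball y r \<inter> affine hull Z \<subseteq> Z" and "y \<in> Z"
    using assms(2) mem_rel_interior_ball by blast
  define \<mu> where "\<mu> = a/b"
  define c where "c = a/(1 - \<mu>)"
  have \<mu>: "0 < \<mu>" "\<mu> < 1" "\<mu> * b = a"
    using assms(5,6) unfolding \<mu>_def by auto
  have c: "c > 0" "(1 - \<mu>) * c = a"
    using \<mu> assms(5) unfolding c_def by auto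
  show ?thesis
  proof (intro exI[of _ "r/c"] conjI ballI)
    show "r/c > 0" using r c by simp
    fix x assume x: "x \<in> Z \<inter> ball x\<^sub>0 (r/c)"
    define w where "w = y + c *\<^sub>R (x\<^sub>0 - x)"
    have "w \<in> affine hull Z"
      unfolding w_def
      by (rule mem_affine_3_minus[OF affine_affine_hull])
        (use \<open>y \<in> Z\<close> x assms(3) hull_subset[of Z affine] in auto)
    moreover have "dist y w < r"
    proof -
      have "dist y w = c * dist x\<^sub>0 x"
        unfolding w_def dist_norm using c by simp
      also have "\<dots> < c * (r/c)"
        by (rule mult_strict_left_mono) (use x c in auto)
      also have "\<dots> = r"
        using c by simp
      finally show ?thesis .
    qed
    ultimately have "w \<in> Z"
      using r(2) by (auto simp: dist_commute)
    then have "\<mu> *\<^sub>R (y + b *\<^sub>R (y - x\<^sub>0)) + (1 - \<mu>) *\<^sub>R w \<in> Z"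
      using convexD[OF assms(1) assms(4), of w \<mu> "1 - \<mu>"] \<mu> by simp
    also have "\<mu> *\<^sub>R (y + b *\<^sub>R (y - x\<^sub>0)) + (1 - \<mu>) *\<^sub>R w
        = y + (\<mu> * b) *\<^sub>R (y - x\<^sub>0) + ((1 - \<mu>) * c) *\<^sub>R (x\<^sub>0 - x)"
      unfolding w_def by (simp add: algebra_simps)
    also have "\<dots> = y + a *\<^sub>R (y - x)"
      unfolding \<mu>(3) c(2) by (simp add: algebra_simps)
    finally show "y + a *\<^sub>R (y - x) \<in> Z" .
  qed
qed

definition weight_params :: "'a::real_vector set \<Rightarrow> 'a \<Rightarrow> 'a \<Rightarrow> real set" where
  "weight_params Z y x = {t. 0 \<le> t \<and> t < 1 \<and> y + (t/(1-t)) *\<^sub>R (y - x) \<in> Z}"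

lemma weight_eq_Sup_weight_params: "weight Z y x = Sup (weight_params Z y x)"
proof -
  have rescale: "(1/(1-t)) *\<^sub>R (y - t *\<^sub>R x) = y + (t/(1-t)) *\<^sub>R (y - x)" if "t < 1" for t :: real
  proof -
    have h: "1/(1-t) * t = t/(1-t)" "1/(1-t) = 1 + t/(1-t)"
      using that by (simp_all add: field_simps)
    have "(1/(1-t)) *\<^sub>R (y - t *\<^sub>R x) = (1/(1-t)) *\<^sub>R y - (1/(1-t) * t) *\<^sub>R x"
      by (simp add: algebra_simps)
    also have "\<dots> = y + (t/(1-t)) *\<^sub>R (y - x)"
      unfolding h(1) by (subst h(2)) (simp add: algebra_simps)
    finally show ?thesis .
  qed
  show ?thesis
    unfolding weight_def weight_params_def
    by (rule arg_cong[where f = Sup]) (auto simp: rescale)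
qed

lemma zero_in_weight_params: "y \<in> Z \<Longrightarrow> 0 \<in> weight_params Z y x"
  by (simp add: weight_params_def)

lemma bdd_above_weight_params: "bdd_above (weight_params Z y x)"
  unfolding weight_params_def bdd_above_def by (rule exI[of _ 1]) auto

lemma weight_nonneg: "y \<in> Z \<Longrightarrow> 0 \<le> weight Z y x"
  unfolding weight_eq_Sup_weight_params
  by (rule cSup_upper[OF zero_in_weight_params bdd_above_weight_params])

lemma weight_params_le_weight: "t \<in> weight_params Z y x \<Longrightarrow> t \<le> weight Z y x"
  unfolding weight_eq_Sup_weight_params by (rule cSup_upper[OF _ bdd_above_weight_params])

lemma weight_params_downward_closed:
  assumes "convex Z" "y \<in> Z" "t \<in> weight_params Z y x" "0 \<le> s" "s \<le> t"
  shows "s \<in> weight_params Z y x"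
proof -
  have "t < 1" and t: "y + (t/(1-t)) *\<^sub>R (y - x) \<in> Z"
    using assms(3) by (auto simp: weight_params_def)
  have "y + (s/(1-s)) *\<^sub>R (y - x) \<in> Z"
  proof (rule convex_ray_segment[OF assms(1,2) t])
    show "0 \<le> s/(1-s)" "s/(1-s) \<le> t/(1-t)"
      using assms(4,5) \<open>t < 1\<close> by (auto intro!: frac_le)
  qed
  then show ?thesis
    using assms(4,5) \<open>t < 1\<close> by (simp add: weight_params_def)
qed

lemma less_weight_imp_weight_params:
  assumes "convex Z" "y \<in> Z" "0 \<le> s" "s < weight Z y x"
  shows "s \<in> weight_params Z y x"
proof -
  have "weight_params Z y x \<noteq> {}"
    using zero_in_weight_params[OF assms(2)] by blast
  then obtain t where "t \<in> weight_params Z y x" "s < t"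
    using assms(4) less_cSup_iff[OF _ bdd_above_weight_params]
    unfolding weight_eq_Sup_weight_params by blast
  then show ?thesis
    using weight_params_downward_closed[OF assms(1,2)] assms(3) by auto
qed

lemma weight_params_convex_combination:
  assumes "convex Z" "t \<in> weight_params Z y a" "t \<in> weight_params Z y b" "0 \<le> u" "u \<le> 1"
  shows "t \<in> weight_params Z y (u *\<^sub>R a + (1 - u) *\<^sub>R b)"
proof -
  define c where "c = t/(1-t)"
  have "u *\<^sub>R (y + c *\<^sub>R (y - a)) + (1 - u) *\<^sub>R (y + c *\<^sub>R (y - b)) \<in> Z"
    using assms convexD[OF assms(1)] unfolding weight_params_def c_def by auto
  also have "u *\<^sub>R (y + c *\<^sub>R (y - a)) + (1 - u) *\<^sub>R (y + c *\<^sub>R (y - b))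
      = y + c *\<^sub>R (y - (u *\<^sub>R a + (1 - u) *\<^sub>R b))"
    by (simp add: algebra_simps)
  finally show ?thesis
    using assms unfolding weight_params_def c_def by auto
qed

lemma weight_geI:
  assumes "y \<in> Z" "\<And>t. 0 \<le> t \<Longrightarrow> t < c \<Longrightarrow> t \<in> weight_params Z y x"
  shows "c \<le> weight Z y x"
proof (rule ccontr)
  assume "\<not> c \<le> weight Z y x"
  then have "0 \<le> (weight Z y x + c)/2" "(weight Z y x + c)/2 < c"
    using weight_nonneg[OF assms(1), of x] by auto
  then have "(weight Z y x + c)/2 \<le> weight Z y x"
    using assms(2) weight_params_le_weight by blast
  then show False
    using \<open>\<not> c \<le> weight Z y x\<close> by auto
qed

lemma weight_quasiconcave:
  assumes "convex Z" "y \<in> Z" "0 \<le> u" "u \<le> 1"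
  shows "min (weight Z y a) (weight Z y b) \<le> weight Z y (u *\<^sub>R a + (1 - u) *\<^sub>R b)"
  by (rule weight_geI[OF assms(2)])
    (intro weight_params_convex_combination less_weight_imp_weight_params assms; simp)

lemma convex_weight_superlevel:
  assumes "convex Z" "y \<in> Z"
  shows "convex {x. m < weight Z y x}"
proof (rule convexI, simp)
  fix a b and u v :: real
  assume "m < weight Z y a" "m < weight Z y b" "0 \<le> u" "0 \<le> v" "u + v = 1"
  then have "m < min (weight Z y a) (weight Z y b)"
    by simp
  also have "\<dots> \<le> weight Z y (u *\<^sub>R a + (1 - u) *\<^sub>R b)"
    using weight_quasiconcave[OF assms, of u a b] \<open>0 \<le> u\<close> \<open>0 \<le> v\<close> \<open>u + v = 1\<close> by simp
  also have "u *\<^sub>R a + (1 - u) *\<^sub>R b = u *\<^sub>R a + v *\<^sub>R b"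
    using \<open>u + v = 1\<close> by (simp add: eq_diff_eq')
  finally show "m < weight Z y (u *\<^sub>R a + v *\<^sub>R b)" .
qed

lemma weight_lower_semicontinuous:
  fixes Z :: "'a::euclidean_space set"
  assumes "convex Z" "y \<in> rel_interior Z" "x\<^sub>0 \<in> Z" "a < weight Z y x\<^sub>0"
  shows "\<exists>d>0. \<forall>x\<in>Z \<inter> ball x\<^sub>0 d. a < weight Z y x"
proof -
  have "y \<in> Z"
    using assms(2) rel_interior_subset by blast
  show ?thesis
  proof (cases "a < 0")
    case True
    then show ?thesis
      using weight_nonneg[OF \<open>y \<in> Z\<close>] by (intro exI[of _ 1]) (auto intro: less_le_trans)
  next
    case False
    define s where "s = (2 * a + weight Z y x\<^sub>0) / 3"
    define t where "t = (a + 2 * weight Z y x\<^sub>0) / 3"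
    have st: "a < s" "s < t" "t < weight Z y x\<^sub>0"
      using assms(4) unfolding s_def t_def by auto
    then have "t \<in> weight_params Z y x\<^sub>0"
      using False less_weight_imp_weight_params[OF assms(1) \<open>y \<in> Z\<close>] by auto
    then have "t < 1" "y + (t/(1-t)) *\<^sub>R (y - x\<^sub>0) \<in> Z"
      by (auto simp: weight_params_def)
    moreover have "0 < s/(1-s)" "s/(1-s) < t/(1-t)"
      using st False \<open>t < 1\<close> by (auto intro!: divide_pos_pos frac_less)
    ultimately obtain d where "d > 0" and d: "\<forall>x\<in>Z \<inter> ball x\<^sub>0 d. y + (s/(1-s)) *\<^sub>R (y - x) \<in> Z"
      using stretch_in_convex_near[OF assms(1-3)] by blast
    have "a < weight Z y x" if "x \<in> Z \<inter> ball x\<^sub>0 d" for x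
    proof -
      have "s \<in> weight_params Z y x"
        using d that st False \<open>t < 1\<close> by (simp add: weight_params_def)
      then show ?thesis
        using st weight_params_le_weight by fastforce
  qed
  then show ?thesis
    using \<open>d > 0\<close> by blast
  qed
qed

lemma rel_interior_if_not_alg_boundary:
  fixes Z :: "'a::euclidean_space set"
  assumes "convex Z" "y \<in> Z - alg_boundary Z"
  shows "y \<in> rel_interior Z"
proof -
  have "y \<in> Z" "Z \<noteq> {}"
    using assms(2) by auto
  show ?thesis
    unfolding convex_rel_interior_iff[OF assms(1) \<open>Z \<noteq> {}\<close>]
  proof (intro conjI ballI \<open>y \<in> Z\<close>)
    fix x assume "x \<in> Z"
    then obtain z t where z: "z \<in> Z" "0 < t" "t \<le> 1" "y = t *\<^sub>R x + (1 - t) *\<^sub>R z"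
      using assms(2) unfolding alg_boundary_def conv_le_def by auto
    show "\<exists>e>1. (1 - e) *\<^sub>R x + e *\<^sub>R y \<in> Z"
    proof (cases "t = 1")
      case True
      then have "(1 - 2) *\<^sub>R x + (2::real) *\<^sub>R y = y"
        using z by (simp add: algebra_simps scaleR_2)
      then show ?thesis
        using \<open>y \<in> Z\<close> by (intro exI[of _ 2]) auto
    next
      case False
      define e where "e = 1/(1-t)"
      have e: "e > 1" "e * (1 - t) = 1" "1 - e + e * t = 0"
        using z False unfolding e_def by (auto simp: field_simps)
      have "(1 - e) *\<^sub>R x + e *\<^sub>R y = (1 - e + e * t) *\<^sub>R x + (e * (1 - t)) *\<^sub>R z"
        unfolding z(4) by (simp add: algebra_simps)
      also have "\<dots> = z"
        unfolding e by simp
      finally show ?thesis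
        using e z by auto
    qed
  qed
qed

theorem proposition1:
  fixes Z :: "'a::euclidean_space set" and y :: 'a
  assumes "convex Z" and "compact Z"
    and "y \<in> Z - alg_boundary Z"
  shows "\<exists>x. x extreme_point_of Z \<and> boundariness Z y = weight Z y x"
proof -
  have "y \<in> Z" and y: "y \<in> rel_interior Z"
    using assms rel_interior_if_not_alg_boundary by auto
  have "\<exists>U. open U \<and> x \<in> U \<and> (\<forall>z\<in>Z \<inter> U. a < weight Z y z)"
    if "x \<in> Z" "a < weight Z y x" for x a
    using weight_lower_semicontinuous[OF assms(1) y that] by (meson centre_in_ball open_ball)
  then obtain l where "l \<in> Z" and l_min: "\<And>z. z \<in> Z \<Longrightarrow> weight Z y l \<le> weight Z y z"
    using compact_lower_semicontinuous_attains_inf[OF assms(2)] \<open>y \<in> Z\<close> by blast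
  have b: "boundariness Z y = weight Z y l"
    unfolding boundariness_def by (rule cInf_eq_minimum) (use \<open>l \<in> Z\<close> l_min in auto)
  show ?thesis
  proof (rule ccontr)
    assume "\<not> ?thesis"
    then have "{x. x extreme_point_of Z} \<subseteq> {x. weight Z y l < weight Z y x}"
      using l_min b by (force simp: extreme_point_of_def)
    then have "convex hull {x. x extreme_point_of Z} \<subseteq> {x. weight Z y l < weight Z y x}"
      by (rule hull_minimal) (rule convex_weight_superlevel[OF assms(1) \<open>y \<in> Z\<close>])
    then show False
      using Krein_Milman_Minkowski[OF assms(2,1)] \<open>l \<in> Z\<close> by auto
  qed
qed

end
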